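(* Let $f:H\to\mathbb{R}\cup\{+\infty\}$ be proper, lower semicontinuous, and have the K\L{} property at a global minimum $x^*$ of $f$. Fix $\underline a>0$ and $M>0$. Then there exist $\gamma>0$ and $\eta>0$ such that every sequence $(x^k)$ satisfying $\mathbf{H}_1$, $\mathbf{H}_2$, $\mathbf{H}_3$ with $\varepsilon_k=0$ for all $k$, $a_k\ge\underline a$ for all $k$, $\sup_{k\ge1}\frac{1}{a_kb_k}\le M$, and $x^0\in\underline{\Gamma}_\eta(x^*,\gamma)$, $f$-converges to a global minimum $\bar x$ of $f$ and satisfies $\sum_{k=0}^{+\infty}\|x^{k+1}-x^k\|<+\infty$.
   Context: Subdifferential $\partial f$ (limiting Fréchet), lazy slope $\|\partial f(x)\|_-=\inf_{p\in\partial f(x)}\|p\|$ ($+\infty$ if $\partial f(x)=\emptyset$), $f$-convergence ($x^k\to x$ and $f(x^k)\to f(x)$). A desingularizing function is a continuous concave $\varphi:[0,\eta_0[\to[0,+\infty[$ with $\varphi(0)=0$, $C^1$ on $]0,\eta_0[$ with $\varphi'>0$. $f$ has the K\L{} property at $x^*$ with desingularizing $\varphi$ if there is $\delta>0$ with $\varphi'(f(x)-f(x^* ))\|\partial f(x)\|_-\ge1$ for all $x\in\Gamma_{\eta_0}(x^*,\delta)=\{x:\|x-x^*\|<\delta,\ f(x^* )<f(x)<f(x^* )+\eta_0\}$. Relaxed local upper level set: $\underline{\Gamma}_\eta(x^*,\gamma)=\{x\in H:\|x-x^*\|<\gamma,\ f(x^* )\le f(x)<f(x^* )+\eta\}$.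 $\mathbf{H}_1$: $f(x^{k+1})+a_k\|x^{k+1}-x^k\|^2\le f(x^k)$, $a_k>0$. $\mathbf{H}_2$: $b_{k+1}\|\partial f(x^{k+1})\|_-\le\|x^{k+1}-x^k\|+\varepsilon_{k+1}$, $b_{k+1}>0$, $\varepsilon_{k+1}\ge0$. $\mathbf{H}_3$: (i) $a_k\ge\underline a>0$; (ii) $(b_k)\notin\ell^1$; (iii) $\sup_{k\ge1}\frac1{a_kb_k}<\infty$; (iv) $(\varepsilon_k)\in\ell^1$. *)

theory Defs
  imports "HOL-Analysis.Analysis"
begin

text \<open>Extended-real valued functions f : H \<rightarrow> \<real> \<union> {+\<infinity>} on a real Hilbert space H
  (type class real_inner + complete_space), encoded with values in ereal.\<close>

definition proper_fun :: "('a \<Rightarrow> ereal) \<Rightarrow> bool" where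
  "proper_fun f \<longleftrightarrow> (\<forall>x. f x \<noteq> -\<infinity>) \<and> (\<exists>x. f x \<noteq> \<infinity>)"

definition lsc_fun :: "('a::topological_space \<Rightarrow> ereal) \<Rightarrow> bool" where
  "lsc_fun f \<longleftrightarrow> (\<forall>x. f x \<le> Liminf (at x) f)"

text \<open>Frechet subdifferential: p \<in> \<partial>^f(x) iff f(x) finite and
  liminf_{y\<rightarrow>x, y\<noteq>x} (f y - f x - <p, y - x>)/|y - x| \<ge> 0 (written out).\<close>
definition frechet_subdiff :: "('a::real_inner \<Rightarrow> ereal) \<Rightarrow> 'a \<Rightarrow> 'a set" where
  "frechet_subdiff f x = {p. \<bar>f x\<bar> \<noteq> \<infinity> \<and>
     (\<forall>e>0. \<exists>d>0. \<forall>y. norm (y - x) < d \<longrightarrow>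
        f y \<ge> f x + ereal (inner p (y - x) - e * norm (y - x)))}"

definition limiting_subdiff :: "('a::real_inner \<Rightarrow> ereal) \<Rightarrow> 'a \<Rightarrow> 'a set" where
  "limiting_subdiff f x = {p. \<exists>xs ps. xs \<longlonglongrightarrow> x \<and> (\<lambda>n. f (xs n)) \<longlonglongrightarrow> f x \<and>
     (\<forall>n. ps n \<in> frechet_subdiff f (xs n)) \<and> ps \<longlonglongrightarrow> p}"

text \<open>Lazy slope: inf of norms of subgradients; +\<infinity> if the subdifferential is empty.\<close>
definition lazy_slope :: "('a::real_inner \<Rightarrow> ereal) \<Rightarrow> 'a \<Rightarrow> ereal" where
  "lazy_slope f x = Inf ((\<lambda>p. ereal (norm p)) ` limiting_subdiff f x)"

definition desingularizing :: "real \<Rightarrow> (real \<Rightarrow> real) \<Rightarrow> (real \<Rightarrow> real) \<Rightarrow> bool" where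
  "desingularizing \<eta>0 \<phi> \<phi>' \<longleftrightarrow> \<eta>0 > 0 \<and>
     continuous_on {0..<\<eta>0} \<phi> \<and> concave_on {0..<\<eta>0} \<phi> \<and> \<phi> 0 = 0 \<and>
     (\<forall>s\<in>{0..<\<eta>0}. \<phi> s \<ge> 0) \<and>
     (\<forall>s\<in>{0<..<\<eta>0}. (\<phi> has_real_derivative \<phi>' s) (at s) \<and> \<phi>' s > 0) \<and>
     continuous_on {0<..<\<eta>0} \<phi>'"

definition KL_at :: "('a::real_inner \<Rightarrow> ereal) \<Rightarrow> 'a \<Rightarrow> bool" where
  "KL_at f xs \<longleftrightarrow> (\<exists>\<eta>0 \<phi> \<phi>' \<delta>. desingularizing \<eta>0 \<phi> \<phi>' \<and> \<delta> > 0 \<and>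
     (\<forall>x. norm (x - xs) < \<delta> \<and> f xs < f x \<and> f x < f xs + ereal \<eta>0 \<longrightarrow>
        ereal (\<phi>' (real_of_ereal (f x - f xs))) * lazy_slope f x \<ge> 1))"

definition global_min :: "('a \<Rightarrow> ereal) \<Rightarrow> 'a \<Rightarrow> bool" where
  "global_min f xs \<longleftrightarrow> (\<forall>y. f xs \<le> f y)"

definition relaxed_level_set :: "('a::real_normed_vector \<Rightarrow> ereal) \<Rightarrow> 'a \<Rightarrow> real \<Rightarrow> real \<Rightarrow> 'a set" where
  "relaxed_level_set f xs \<eta> \<gamma> = {x. norm (x - xs) < \<gamma> \<and> f xs \<le> f x \<and> f x < f xs + ereal \<eta>}"

end

theory Submission
  imports Defs
begin

text \<open>
  Write \<open>r k = f(x k) - f xs\<close> for the gap to the minimal value and \<open>d k = |x(k+1) - x k|\<close>.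
  Sufficient decrease makes \<open>r\<close> nonincreasing and \<open>a d\<^sup>2 \<le> r k - r(k+1)\<close>.  Near \<open>xs\<close> the K\L{}
  inequality together with the relative error condition gives \<open>b(k+1) \<le> \<phi>'(r(k+1)) d k\<close>, and the
  concavity of \<open>\<phi>\<close> turns these two facts into the telescoping estimate
  \<open>2 d(k+1) \<le> d k + M (\<phi>(r(k+1)) - \<phi>(r(k+2)))\<close>.  Starting close enough to \<open>xs\<close> this keeps
  the iterates in the K\L{} neighbourhood forever, so the sequence has finite length and converges.
  Since \<open>b\<close> is not summable while \<open>\<phi>'\<close> stays bounded on compact subintervals of \<open>]0,\<eta>0[\<close>, the
  gaps tend to \<open>0\<close>; lower semicontinuity then shows that the limit is a global minimum.
\<close>

text \<open>The graph of a concave function lies below each of its tangents; applied to the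
  desingularizing function this turns a decrease of the values into a decrease of \<open>\<phi>\<close>.\<close>

lemma concave_tangent:
  fixes g :: "real \<Rightarrow> real"
  assumes "concave_on {0..<e} g" "c \<in> {0<..<e}" "y \<in> {0..<e}"
    "(g has_real_derivative g') (at c)"
  shows "g y \<le> g c + g' * (y - c)"
proof -
  have "convex_on {0..<e} (\<lambda>x. - g x)" using assms(1) by (simp add: concave_on_def)
  moreover have "((\<lambda>x. - g x) has_field_derivative - g') (at c within {0..<e})"
    using DERIV_minus[OF assms(4)] by (rule has_field_derivative_at_within)
  moreover have "connected {0..<e}" by (simp add: is_interval_connected)
  moreover have "c \<in> interior {0..<e}" using assms(2) by (simp add: interior_atLeastLessThan)
  ultimately have "(- g') * (y - c) \<le> (- g y) - (- g c)"
    using convex_on_imp_above_tangent[OF _ _ _ assms(3)] by blast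
  then show ?thesis by (simp add: algebra_simps)
qed

lemma desingularizing_small:
  assumes "desingularizing \<eta>0 \<phi> \<phi>'" and "0 < \<epsilon>"
  obtains e where "0 < e" and "\<And>s. 0 \<le> s \<Longrightarrow> s < e \<Longrightarrow> \<phi> s < \<epsilon>"
proof -
  have "0 < \<eta>0" "continuous_on {0..<\<eta>0} \<phi>" "\<phi> 0 = 0"
    using assms(1) unfolding desingularizing_def by auto
  moreover have "0 \<in> {0..<\<eta>0}" using \<open>0 < \<eta>0\<close> by simp
  ultimately have "\<exists>d>0. \<forall>s\<in>{0..<\<eta>0}. dist s 0 < d \<longrightarrow> dist (\<phi> s) (\<phi> 0) < \<epsilon>"
    using assms(2) unfolding continuous_on_iff by blast
  then obtain d where "0 < d" and d: "\<And>s. s \<in> {0..<\<eta>0} \<Longrightarrow> dist s 0 < d \<Longrightarrow> dist (\<phi> s) 0 < \<epsilon>"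
    using \<open>\<phi> 0 = 0\<close> by auto
  show ?thesis
  proof
    show "0 < min d \<eta>0" using \<open>0 < d\<close> \<open>0 < \<eta>0\<close> by simp
    show "\<phi> s < \<epsilon>" if "0 \<le> s" "s < min d \<eta>0" for s
      using d[of s] that by (simp add: dist_real_def)
  qed
qed

lemma lazy_slope_nonneg: "0 \<le> lazy_slope f x"
  unfolding lazy_slope_def by (auto intro!: Inf_greatest)

lemma KL_stepsize_bound:
  fixes s :: ereal and p B d :: real
  assumes KL: "1 \<le> ereal p * s" and rel_err: "ereal B * s \<le> ereal d"
    and "0 < B" "0 < p" "0 \<le> s"
  shows "B \<le> p * d"
proof (cases s)
  case (real t)
  then have "1 \<le> p * t" "B * t \<le> d" using KL rel_err by auto
  then have "B * 1 \<le> B * (p * t)" using \<open>0 < B\<close> by (intro mult_left_mono) auto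
  also have "\<dots> = p * (B * t)" by simp
  also have "\<dots> \<le> p * d" using \<open>B * t \<le> d\<close> \<open>0 < p\<close> by (intro mult_left_mono) auto
  finally show ?thesis by simp
next
  case PInf
  then show ?thesis using rel_err \<open>0 < B\<close> by simp
next
  case MInf
  then show ?thesis using \<open>0 \<le> s\<close> by simp
qed

text \<open>With \<open>u\<close> the new and \<open>v\<close> the previous step length,
  sufficient decrease, the slope bound, concavity and \<open>1/(A B) \<le> M\<close> give
  \<open>u\<^sup>2 \<le> v (M \<Delta>\<phi>)\<close>, hence \<open>2 u \<le> v + M \<Delta>\<phi>\<close> by the AM-GM inequality.\<close>

lemma KL_length_step:
  fixes A B p u v M \<Delta>r \<Delta>\<phi> :: real
  assumes descent: "A * u\<^sup>2 \<le> \<Delta>r" and slope: "B \<le> p * v" and concave: "p * \<Delta>r \<le> \<Delta>\<phi>"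
    and coupling: "1 \<le> M * (A * B)"
    and "0 < A" "0 < B" "0 < p" "0 \<le> u" "0 \<le> v" "0 < M"
  shows "2 * u \<le> v + M * \<Delta>\<phi>"
proof -
  have pAu: "p * (A * u\<^sup>2) \<le> \<Delta>\<phi>"
    using mult_left_mono[OF descent, of p] concave \<open>0 < p\<close> by linarith
  moreover have "0 \<le> p * (A * u\<^sup>2)" using assms by simp
  ultimately have "0 \<le> M * \<Delta>\<phi>" using \<open>0 < M\<close> by simp
  have "u\<^sup>2 \<le> M * (A * B) * u\<^sup>2" using mult_right_mono[OF coupling] by simp
  also have "\<dots> = M * (B * (A * u\<^sup>2))" by simp
  also have "\<dots> \<le> M * ((p * v) * (A * u\<^sup>2))"
    using assms by (intro mult_left_mono mult_right_mono) auto
  also have "\<dots> = M * v * (p * (A * u\<^sup>2))" by simp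
  also have "\<dots> \<le> M * v * \<Delta>\<phi>" using assms by (intro mult_left_mono[OF pAu]) auto
  finally have "u \<le> sqrt (v * (M * \<Delta>\<phi>))" by (intro real_le_rsqrt) (simp add: ac_simps)
  also have "\<dots> \<le> (v + M * \<Delta>\<phi>) / 2" by (rule arith_geo_mean_sqrt) fact+
  finally show ?thesis by simp
qed

definition step_len :: "(nat \<Rightarrow> 'a::real_normed_vector) \<Rightarrow> nat \<Rightarrow> real" where
  "step_len x k = norm (x (Suc k) - x k)"

lemma step_len_nonneg: "0 \<le> step_len x k"
  by (simp add: step_len_def)

lemma norm_diff_le_path_length:
  assumes "m \<le> n"
  shows "norm (x n - x m) \<le> (\<Sum>i = m..<n. step_len x i)"
proof -
  have "x n - x m = (\<Sum>i = m..<n. x (Suc i) - x i)"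
    using sum_Suc_diff'[OF assms, of x] by simp
  then show ?thesis unfolding step_len_def by (metis norm_sum)
qed

lemma finite_length_imp_Cauchy:
  assumes "summable (step_len x)"
  shows "Cauchy x"
proof (rule metric_CauchyI)
  fix \<epsilon> :: real assume "\<epsilon> > 0"
  then obtain N where N: "\<And>m n. m \<ge> N \<Longrightarrow> norm (\<Sum>i = m..<n. step_len x i) < \<epsilon>"
    using assms unfolding summable_Cauchy by blast
  have "dist (x m) (x n) < \<epsilon>" if "N \<le> m" "m \<le> n" for m n
    using norm_diff_le_path_length[OF \<open>m \<le> n\<close>, of x] N[OF \<open>N \<le> m\<close>, of n]
    by (simp add: dist_norm norm_minus_commute)
  then show "\<exists>N. \<forall>m\<ge>N. \<forall>n\<ge>N. dist (x m) (x n) < \<epsilon>"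
    by (metis dist_commute nle_le)
qed

lemma trapped_finite_length:
  fixes x :: "nat \<Rightarrow> 'a::real_normed_vector" and c :: "nat \<Rightarrow> real"
  assumes c_nonneg: "\<And>k. 0 \<le> c k"
    and step: "\<And>N. norm (x (Suc N) - xs) < \<delta> \<Longrightarrow>
                 2 * step_len x (Suc N) \<le> step_len x N + c (Suc N) - c (Suc (Suc N))"
    and start: "norm (x 0 - xs) + 2 * step_len x 0 + c 1 < \<delta>"
  shows "norm (x k - xs) < \<delta>" and "summable (step_len x)"
proof -
  let ?d = "step_len x"
  define B where "B = ?d 0 + c 1"
  have in_ball: "norm (x (Suc m) - xs) < \<delta>" if "(\<Sum>k<m. ?d (Suc k)) \<le> B" for m
  proof -
    have "norm (x (Suc m) - x 0) \<le> (\<Sum>k<Suc m. ?d k)"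
      using norm_diff_le_path_length[of 0 "Suc m" x] by (simp add: atLeast0LessThan)
    also have "\<dots> = ?d 0 + (\<Sum>k<m. ?d (Suc k))" by (simp only: sum.lessThan_Suc_shift)
    finally show ?thesis
      using that start norm_triangle_ineq[of "x 0 - xs" "x (Suc m) - x 0"] unfolding B_def by simp
  qed
  have invariant: "(\<Sum>k<m. ?d (Suc k)) + ?d m + c (Suc m) \<le> B" for m
  proof (induction m)
    case 0
    then show ?case by (simp add: B_def)
  next
    case (Suc m)
    then have "(\<Sum>k<m. ?d (Suc k)) \<le> B" using c_nonneg[of "Suc m"] step_len_nonneg[of x m] by linarith
    then have "2 * ?d (Suc m) \<le> ?d m + c (Suc m) - c (Suc (Suc m))" by (intro step in_ball)
    then show ?case using Suc by simp
  qed
  have partial_bound: "(\<Sum>k<m. ?d (Suc k)) \<le> B" for m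
    using invariant[of m] c_nonneg[of "Suc m"] step_len_nonneg[of x m] by linarith
  show "norm (x k - xs) < \<delta>"
    using start in_ball[OF partial_bound] step_len_nonneg[of x 0] c_nonneg[of 1]
    by (cases k) auto
  show "summable ?d"
  proof (rule bounded_imp_summable)
    show "(\<Sum>k\<le>n. ?d k) \<le> ?d 0 + B" for n
      using partial_bound[of n]
      by (simp only: lessThan_Suc_atMost[symmetric] sum.lessThan_Suc_shift)
  qed (rule step_len_nonneg)
qed

text \<open>If the gaps \<open>r\<close> decrease to a positive limit, \<open>\<phi>'\<close> is bounded along them and the slope
  bound makes \<open>b\<close> summable.\<close>

lemma KL_limit_zero:
  fixes r b d :: "nat \<Rightarrow> real" and \<phi>' :: "real \<Rightarrow> real"
  assumes "decseq r" "\<And>k. 0 \<le> r k" "r 0 < \<eta>0"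
    and "continuous_on {0<..<\<eta>0} \<phi>'"
    and "\<And>k. 0 < b (Suc k)" "\<And>k. 0 \<le> d k" "summable d" "\<not> summable b"
    and slope: "\<And>k. 0 < r (Suc k) \<Longrightarrow> b (Suc k) \<le> \<phi>' (r (Suc k)) * d k"
  shows "r \<longlonglongrightarrow> 0"
proof -
  obtain L where r_lim: "r \<longlonglongrightarrow> L" and L_le: "\<And>k. L \<le> r k"
    using decseq_convergent[OF assms(1), of 0] assms(2) by blast
  have "0 \<le> L" using r_lim assms(2) by (intro LIMSEQ_le_const) auto
  moreover have "L \<le> 0"
  proof (rule ccontr)
    assume "\<not> L \<le> 0"
    \<comment> \<open>Then the gaps stay in a compact subinterval of \<open>]0,\<eta>0[\<close>, where \<open>\<phi>'\<close> is bounded,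
      so the slope condition makes \<open>b\<close> summable by comparison with \<open>d\<close>.\<close>
    then have sub: "{L..r 0} \<subseteq> {0<..<\<eta>0}" using assms(3) by auto
    have "bounded (\<phi>' ` {L..r 0})"
      using continuous_on_subset[OF assms(4) sub] by (intro compact_imp_bounded compact_continuous_image) auto
    then obtain C where "\<forall>y\<in>\<phi>' ` {L..r 0}. norm y \<le> C" unfolding bounded_iff by blast
    then have C: "\<And>s. s \<in> {L..r 0} \<Longrightarrow> \<phi>' s \<le> C" by (simp add: abs_le_iff)
    have "norm (b (Suc k)) \<le> C * d k" for k
    proof -
      have "r (Suc k) \<in> {L..r 0}" using L_le decseqD[OF assms(1), of 0 "Suc k"] by auto
      moreover have "0 < r (Suc k)" using L_le[of "Suc k"] \<open>\<not> L \<le> 0\<close> by linarith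
      ultimately have "b (Suc k) \<le> \<phi>' (r (Suc k)) * d k" and "\<phi>' (r (Suc k)) * d k \<le> C * d k"
        using slope[of k] C assms(6)[of k] by (auto intro: mult_right_mono)
      then show ?thesis using assms(5)[of k] by simp
    qed
    then have "summable (\<lambda>k. b (Suc k))"
      by (rule summable_comparison_test'[OF summable_mult[OF assms(7)]])
    then show False using assms(8) by (simp add: summable_Suc_iff)
  qed
  ultimately show ?thesis using r_lim by simp
qed

lemma KL_descent_finite_length:
  fixes x :: "nat \<Rightarrow> 'a::{real_normed_vector, complete_space}"
    and r a b :: "nat \<Rightarrow> real" and \<phi> \<phi>' :: "real \<Rightarrow> real"
  assumes des: "desingularizing \<eta>0 \<phi> \<phi>'" and "0 < M"
    and r_nonneg: "\<And>k. 0 \<le> r k" and r_small: "\<And>k. r k < \<eta>0"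
    and descent: "\<And>k. r (Suc k) + a k * (step_len x k)\<^sup>2 \<le> r k"
    and a_pos: "\<And>k. 0 < a k" and b_pos: "\<And>k. 0 < b (Suc k)"
    and coupling: "\<And>k. 1 \<le> k \<Longrightarrow> 1 / (a k * b k) \<le> M" and b_not_summable: "\<not> summable b"
    and slope: "\<And>k. norm (x (Suc k) - xs) < \<delta> \<Longrightarrow> 0 < r (Suc k) \<Longrightarrow>
                  b (Suc k) \<le> \<phi>' (r (Suc k)) * step_len x k"
    and start: "norm (x 0 - xs) + 2 * step_len x 0 + M * \<phi> (r 1) < \<delta>"
  shows "summable (step_len x)" and "convergent x" and "r \<longlonglongrightarrow> 0"
proof -
  let ?d = "step_len x"
  from des have \<phi>_concave: "concave_on {0..<\<eta>0} \<phi>" and "\<phi> 0 = 0"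
    and \<phi>_nonneg: "\<And>s. s \<in> {0..<\<eta>0} \<Longrightarrow> 0 \<le> \<phi> s"
    and \<phi>_deriv: "\<And>s. s \<in> {0<..<\<eta>0} \<Longrightarrow> (\<phi> has_real_derivative \<phi>' s) (at s) \<and> 0 < \<phi>' s"
    and \<phi>'_cont: "continuous_on {0<..<\<eta>0} \<phi>'"
    unfolding desingularizing_def by auto
  have r_in: "r k \<in> {0..<\<eta>0}" for k using r_nonneg r_small by simp
  have r_dec: "decseq r"
  proof (rule decseq_SucI)
    show "r (Suc k) \<le> r k" for k
      using descent[of k] mult_nonneg_nonneg[OF less_imp_le[OF a_pos[of k]] zero_le_power2[of "?d k"]]
      by linarith
  qed
  have step: "2 * ?d (Suc N) \<le> ?d N + M * \<phi> (r (Suc N)) - M * \<phi> (r (Suc (Suc N)))"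
    if ball: "norm (x (Suc N) - xs) < \<delta>" for N
  proof (cases "r (Suc N) = 0")
    case True
    then have "r (Suc (Suc N)) = 0"
      using decseqD[OF r_dec, of "Suc N" "Suc (Suc N)"] r_nonneg[of "Suc (Suc N)"] by simp
    then have "a (Suc N) * (?d (Suc N))\<^sup>2 \<le> 0" using descent[of "Suc N"] True by simp
    then have "?d (Suc N) = 0" using a_pos[of "Suc N"] by (simp add: mult_le_0_iff)
    then show ?thesis using True \<open>r (Suc (Suc N)) = 0\<close> \<open>\<phi> 0 = 0\<close> step_len_nonneg[of x N] by simp
  next
    case False
    then have r_pos: "r (Suc N) \<in> {0<..<\<eta>0}" using r_in[of "Suc N"] by auto
    have "\<phi> (r (Suc (Suc N))) \<le> \<phi> (r (Suc N)) + \<phi>' (r (Suc N)) * (r (Suc (Suc N)) - r (Suc N))"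
      using concave_tangent[OF \<phi>_concave r_pos r_in] \<phi>_deriv[OF r_pos] by blast
    then have tangent: "\<phi>' (r (Suc N)) * (r (Suc N) - r (Suc (Suc N)))
        \<le> \<phi> (r (Suc N)) - \<phi> (r (Suc (Suc N)))" by (simp add: algebra_simps)
    have coupled: "1 \<le> M * (a (Suc N) * b (Suc N))"
      using coupling[of "Suc N"] a_pos[of "Suc N"] b_pos[of N] by (simp add: field_simps)
    have decrease: "a (Suc N) * (?d (Suc N))\<^sup>2 \<le> r (Suc N) - r (Suc (Suc N))"
      using descent[of "Suc N"] by simp
    have slope_N: "b (Suc N) \<le> \<phi>' (r (Suc N)) * ?d N"
      using slope[OF ball] r_pos by simp
    have "2 * ?d (Suc N) \<le> ?d N + M * (\<phi> (r (Suc N)) - \<phi> (r (Suc (Suc N))))"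
      by (rule KL_length_step[OF decrease slope_N tangent coupled])
        (use a_pos b_pos \<phi>_deriv[OF r_pos] step_len_nonneg \<open>0 < M\<close> in auto)
    then show ?thesis by (simp add: algebra_simps)
  qed
  have c_nonneg: "0 \<le> M * \<phi> (r k)" for k
    using \<phi>_nonneg[OF r_in] \<open>0 < M\<close> by simp
  have ball: "norm (x k - xs) < \<delta>" for k
    using trapped_finite_length(1)[where c = "\<lambda>k. M * \<phi> (r k)", OF c_nonneg step start] .
  show "summable ?d"
    using trapped_finite_length(2)[where c = "\<lambda>k. M * \<phi> (r k)", OF c_nonneg step start] .
  then show "convergent x"
    using finite_length_imp_Cauchy Cauchy_convergent by blast
  show "r \<longlonglongrightarrow> 0"
    using KL_limit_zero[OF r_dec r_nonneg r_small \<phi>'_cont b_pos step_len_nonneg \<open>summable ?d\<close>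
        b_not_summable] slope[OF ball] by blast
qed

lemma global_min_finite:
  assumes "proper_fun f" and "global_min f xs"
  shows "f xs = ereal (real_of_ereal (f xs))"
proof -
  obtain z where "f z \<noteq> \<infinity>" using assms(1) unfolding proper_fun_def by auto
  moreover have "f xs \<le> f z" using assms(2) unfolding global_min_def by auto
  moreover have "f xs \<noteq> -\<infinity>" using assms(1) unfolding proper_fun_def by auto
  ultimately show ?thesis by (cases "f xs") auto
qed

lemma descent_values_real:
  fixes f :: "'a::real_normed_vector \<Rightarrow> ereal"
  assumes descent: "\<And>k. f (x (Suc k)) + ereal (a k * (step_len x k)\<^sup>2) \<le> f (x k)"
    and a_nonneg: "\<And>k. 0 \<le> a k" and lower: "\<And>k. ereal m \<le> f (x k)"
    and start: "f (x 0) < ereal (m + \<eta>)"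
  obtains r where "\<And>k. f (x k) = ereal (m + r k)" and "\<And>k. 0 \<le> r k" and "\<And>k. r k < \<eta>"
    and "\<And>k. r (Suc k) + a k * (step_len x k)\<^sup>2 \<le> r k"
proof -
  have "f (x (Suc k)) \<le> f (x k)" for k
  proof -
    have "0 \<le> ereal (a k * (step_len x k)\<^sup>2)" using a_nonneg[of k] by simp
    then have "f (x (Suc k)) \<le> f (x (Suc k)) + ereal (a k * (step_len x k)\<^sup>2)"
      by (rule add_increasing2) simp
    then show ?thesis using descent[of k] by (rule order_trans)
  qed
  then have "f (x k) \<le> f (x 0)" for k
    by (induction k) (auto intro: order_trans)
  then have below: "f (x k) < ereal (m + \<eta>)" for k
    using start by (meson le_less_trans)
  define r where "r k = real_of_ereal (f (x k)) - m" for k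
  have f_eq: "f (x k) = ereal (m + r k)" for k
    using lower[of k] below[of k] unfolding r_def by (cases "f (x k)") auto
  show ?thesis
  proof
    show "f (x k) = ereal (m + r k)" for k by (rule f_eq)
    show "0 \<le> r k" for k using lower[of k] f_eq[of k] by simp
    show "r k < \<eta>" for k using below[of k] f_eq[of k] by simp
    show "r (Suc k) + a k * (step_len x k)\<^sup>2 \<le> r k" for k
      using descent[of k] f_eq[of k] f_eq[of "Suc k"] by simp
  qed
qed

lemma lsc_limit_le:
  fixes f :: "'a::topological_space \<Rightarrow> ereal"
  assumes "lsc_fun f" and "x \<longlonglongrightarrow> xbar" and "(\<lambda>k. f (x k)) \<longlonglongrightarrow> l"
  shows "f xbar \<le> l"
proof (rule dense_le)
  fix c assume "c < f xbar"
  then have "c < Liminf (at xbar) f" using assms(1) unfolding lsc_fun_def by (meson less_le_trans)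
  then have "eventually (\<lambda>y. c < f y) (at xbar)" by (rule less_LiminfD)
  then obtain S where "open S" "xbar \<in> S" and S: "\<And>y. y \<in> S \<Longrightarrow> y \<noteq> xbar \<Longrightarrow> c < f y"
    unfolding eventually_at_topological by blast
  have "eventually (\<lambda>k. x k \<in> S) sequentially"
    using topological_tendstoD[OF assms(2) \<open>open S\<close> \<open>xbar \<in> S\<close>] .
  then have "eventually (\<lambda>k. c \<le> f (x k)) sequentially"
  proof (rule eventually_mono)
    fix k assume "x k \<in> S"
    then show "c \<le> f (x k)" using S \<open>c < f xbar\<close> by (cases "x k = xbar") (auto intro: less_imp_le)
  qed
  then show "c \<le> l" by (rule tendsto_lowerbound[OF assms(3)]) simp
qed

text \<open>The theorem for one sequence, once \<open>\<gamma> = \<delta>/3\<close> and \<open>\<eta>\<close> have been chosen from the K\L{}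
  data: \<open>\<eta> \<le> \<eta>0\<close>, \<open>\<eta> \<le> a_low \<delta>\<^sup>2/36\<close> (so the first step is shorter than \<open>\<delta>/6\<close>) and
  \<open>\<phi> < \<delta>/(3M)\<close> on \<open>[0, \<eta>[\<close>.\<close>

lemma KL_sequence_converges:
  fixes f :: "'a::{real_inner, complete_space} \<Rightarrow> ereal"
    and x :: "nat \<Rightarrow> 'a" and a b :: "nat \<Rightarrow> real" and \<phi> \<phi>' :: "real \<Rightarrow> real"
  assumes lsc: "lsc_fun f" and xs_min: "global_min f xs" and f_xs: "f xs = ereal m"
    and des: "desingularizing \<eta>0 \<phi> \<phi>'" and "0 < \<delta>"
    and KL: "\<And>y. norm (y - xs) < \<delta> \<Longrightarrow> f xs < f y \<Longrightarrow> f y < f xs + ereal \<eta>0 \<Longrightarrow>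
               1 \<le> ereal (\<phi>' (real_of_ereal (f y - f xs))) * lazy_slope f y"
    and "0 < M" and \<eta>_le: "\<eta> \<le> \<eta>0" "\<eta> \<le> a_low * \<delta>\<^sup>2 / 36"
    and \<phi>_small: "\<And>s. 0 \<le> s \<Longrightarrow> s < \<eta> \<Longrightarrow> \<phi> s < \<delta> / (3 * M)"
    and a_pos: "\<And>k. 0 < a k"
    and H1: "\<And>k. f (x (Suc k)) + ereal (a k * (norm (x (Suc k) - x k))\<^sup>2) \<le> f (x k)"
    and b_pos: "\<And>k. 0 < b (Suc k)"
    and H2: "\<And>k. ereal (b (Suc k)) * lazy_slope f (x (Suc k)) \<le> ereal (norm (x (Suc k) - x k) + 0)"
    and a_lower: "\<And>k. a_low \<le> a k" and b_not_summable: "\<not> summable b"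
    and coupling: "\<And>k. 1 \<le> k \<Longrightarrow> 1 / (a k * b k) \<le> M"
    and x0: "x 0 \<in> relaxed_level_set f xs \<eta> (\<delta> / 3)"
  shows "\<exists>xbar. global_min f xbar \<and> x \<longlonglongrightarrow> xbar \<and> (\<lambda>k. f (x k)) \<longlonglongrightarrow> f xbar \<and>
           summable (\<lambda>k. norm (x (Suc k) - x k))"
proof -
  have x0_near: "norm (x 0 - xs) < \<delta> / 3" and x0_level: "f (x 0) < ereal (m + \<eta>)"
    using x0 f_xs unfolding relaxed_level_set_def by auto
  have "ereal m \<le> f (x k)" for k using xs_min f_xs unfolding global_min_def by metis
  then obtain r where f_eq: "\<And>k. f (x k) = ereal (m + r k)" and r_nonneg: "\<And>k. 0 \<le> r k"
    and r_small: "\<And>k. r k < \<eta>" and descent: "\<And>k. r (Suc k) + a k * (step_len x k)\<^sup>2 \<le> r k"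
    using descent_values_real[of f x a] H1 a_pos x0_level unfolding step_len_def
    by (metis less_imp_le)
  have slope: "b (Suc k) \<le> \<phi>' (r (Suc k)) * step_len x k"
    if "norm (x (Suc k) - xs) < \<delta>" and "0 < r (Suc k)" for k
  proof -
    have "r (Suc k) \<in> {0<..<\<eta>0}" using that(2) r_small[of "Suc k"] \<eta>_le by auto
    then have "0 < \<phi>' (r (Suc k))" using des unfolding desingularizing_def by blast
    moreover have "1 \<le> ereal (\<phi>' (r (Suc k))) * lazy_slope f (x (Suc k))"
      using KL[OF that(1)] that(2) r_small[of "Suc k"] \<eta>_le f_eq[of "Suc k"] f_xs by simp
    ultimately show ?thesis
      using KL_stepsize_bound H2[of k] b_pos[of k] lazy_slope_nonneg unfolding step_len_def
      by (metis add.right_neutral)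
  qed
  have "a 0 * (step_len x 0)\<^sup>2 < a 0 * (\<delta> / 6)\<^sup>2"
  proof -
    have "a 0 * (step_len x 0)\<^sup>2 \<le> r 0" using descent[of 0] r_nonneg[of 1] by simp
    also have "\<dots> < a_low * \<delta>\<^sup>2 / 36" using r_small[of 0] \<eta>_le by simp
    also have "\<dots> \<le> a 0 * \<delta>\<^sup>2 / 36" using a_lower[of 0] by (intro divide_right_mono mult_right_mono) auto
    finally show ?thesis by (simp add: power_divide)
  qed
  then have "(step_len x 0)\<^sup>2 < (\<delta> / 6)\<^sup>2" using a_pos[of 0] by simp
  then have "step_len x 0 < \<delta> / 6"
    by (rule power_less_imp_less_base) (use \<open>0 < \<delta>\<close> in simp)
  moreover have "M * \<phi> (r 1) < \<delta> / 3"
    using \<phi>_small[OF r_nonneg r_small] \<open>0 < M\<close> by (simp add: field_simps)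
  ultimately have start: "norm (x 0 - xs) + 2 * step_len x 0 + M * \<phi> (r 1) < \<delta>"
    using x0_near by linarith
  have r_lt: "r k < \<eta>0" for k using r_small[of k] \<eta>_le by simp
  note finite_length = KL_descent_finite_length[OF des \<open>0 < M\<close> r_nonneg r_lt descent a_pos b_pos
      coupling b_not_summable slope start]
  obtain xbar where x_lim: "x \<longlonglongrightarrow> xbar" using finite_length(2) convergent_def by blast
  have "(\<lambda>k. ereal (m + r k)) \<longlonglongrightarrow> ereal (m + 0)"
    using finite_length(3) by (intro lim_ereal[THEN iffD2] tendsto_add tendsto_const)
  then have f_lim: "(\<lambda>k. f (x k)) \<longlonglongrightarrow> f xs" using f_eq f_xs by simp
  have "f xbar = f xs"
    using lsc_limit_le[OF lsc x_lim f_lim] xs_min unfolding global_min_def by (simp add: antisym)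
  then have "global_min f xbar" and "(\<lambda>k. f (x k)) \<longlonglongrightarrow> f xbar"
    using xs_min f_lim unfolding global_min_def by auto
  then show ?thesis
    using x_lim finite_length(1) unfolding step_len_def by blast
qed

theorem mainTheorem3:
  fixes f :: "'a::{real_inner, complete_space} \<Rightarrow> ereal" and xs :: 'a
    and a_low M :: real
  assumes "proper_fun f" and "lsc_fun f" and "global_min f xs" and "KL_at f xs"
    and "a_low > 0" and "M > 0"
  shows "\<exists>\<gamma>>0. \<exists>\<eta>>0. \<forall>(x :: nat \<Rightarrow> 'a) (a :: nat \<Rightarrow> real) (b :: nat \<Rightarrow> real).
     (\<forall>k. a k > 0 \<and> f (x (Suc k)) + ereal (a k * (norm (x (Suc k) - x k))\<^sup>2) \<le> f (x k)) \<and>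
     (\<forall>k. b (Suc k) > 0 \<and>
        ereal (b (Suc k)) * lazy_slope f (x (Suc k)) \<le> ereal (norm (x (Suc k) - x k) + 0)) \<and>
     (\<forall>k. a k \<ge> a_low) \<and>
     \<not> summable b \<and>
     (\<forall>k\<ge>1. 1 / (a k * b k) \<le> M) \<and>
     x 0 \<in> relaxed_level_set f xs \<eta> \<gamma>
     \<longrightarrow> (\<exists>xbar. global_min f xbar \<and> x \<longlonglongrightarrow> xbar \<and> (\<lambda>k. f (x k)) \<longlonglongrightarrow> f xbar \<and>
            summable (\<lambda>k. norm (x (Suc k) - x k)))"
proof -
  obtain \<eta>0 \<phi> \<phi>' \<delta> where des: "desingularizing \<eta>0 \<phi> \<phi>'" and "0 < \<delta>"
    and KL: "\<And>y. norm (y - xs) < \<delta> \<Longrightarrow> f xs < f y \<Longrightarrow> f y < f xs + ereal \<eta>0 \<Longrightarrow>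
               1 \<le> ereal (\<phi>' (real_of_ereal (f y - f xs))) * lazy_slope f y"
    using \<open>KL_at f xs\<close> unfolding KL_at_def by blast
  have "0 < \<delta> / (3 * M)" using \<open>0 < \<delta>\<close> \<open>M > 0\<close> by simp
  then obtain e where "0 < e" and \<phi>_small: "\<And>s. 0 \<le> s \<Longrightarrow> s < e \<Longrightarrow> \<phi> s < \<delta> / (3 * M)"
    using desingularizing_small[OF des] by blast
  define \<eta> where "\<eta> = min \<eta>0 (min e (a_low * \<delta>\<^sup>2 / 36))"
  have "0 < \<eta>" using des \<open>0 < e\<close> \<open>a_low > 0\<close> \<open>0 < \<delta>\<close> by (simp add: \<eta>_def desingularizing_def)
  show ?thesis
  proof (rule exI[of _ "\<delta> / 3"], intro conjI exI[of _ \<eta>] allI impI)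
    fix x :: "nat \<Rightarrow> 'a" and a b :: "nat \<Rightarrow> real"
    assume "(\<forall>k. a k > 0 \<and> f (x (Suc k)) + ereal (a k * (norm (x (Suc k) - x k))\<^sup>2) \<le> f (x k)) \<and>
     (\<forall>k. b (Suc k) > 0 \<and>
        ereal (b (Suc k)) * lazy_slope f (x (Suc k)) \<le> ereal (norm (x (Suc k) - x k) + 0)) \<and>
     (\<forall>k. a k \<ge> a_low) \<and> \<not> summable b \<and> (\<forall>k\<ge>1. 1 / (a k * b k) \<le> M) \<and>
     x 0 \<in> relaxed_level_set f xs \<eta> (\<delta> / 3)"
    then show "\<exists>xbar. global_min f xbar \<and> x \<longlonglongrightarrow> xbar \<and> (\<lambda>k. f (x k)) \<longlonglongrightarrow> f xbar \<and>
            summable (\<lambda>k. norm (x (Suc k) - x k))"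
      using KL_sequence_converges[OF \<open>lsc_fun f\<close> \<open>global_min f xs\<close>
          global_min_finite[OF \<open>proper_fun f\<close> \<open>global_min f xs\<close>] des \<open>0 < \<delta>\<close> KL \<open>M > 0\<close>,
          where \<eta> = \<eta> and a_low = a_low and x = x and a = a and b = b] \<phi>_small
      by (auto simp: \<eta>_def)
  qed (use \<open>0 < \<delta>\<close> \<open>0 < \<eta>\<close> in auto)
qed

end
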